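(* Let $K$ be a perfect field and let $M/K$ be obtained by strong cluster magnification from $L/K$ through a finite Galois extension $F/K$ of degree $d$. Let $L_1,\dots,L_s$ be the $s=s_K(L)$ distinct fields isomorphic to $L$ over $K$, in some order. Then the tower $K\subseteq L_1\subseteq L_1L_2\subseteq\cdots\subseteq L_1L_2\cdots L_s$ (a cluster tower for $L/K$) has length $l$ if and only if the tower $K\subseteq L_1F\subseteq L_1L_2F\subseteq\cdots\subseteq L_1L_2\cdots L_sF$ (a cluster tower for $M/K$) has length $l$. In that case, if the degree sequence of the first tower is $(a_0,a_1,\dots,a_{l-2})$, then the degree sequence of the second tower is $(da_0,da_1,\dots,da_{l-2})$.
   Context: $\bar K$ is a fixed algebraic closure of $K$; $\tilde E$ denotes the Galois closure in $\bar K$ of a finite extension $E/K$. $M/K$ is obtained by strong cluster magnification from a subextension $L/K$ through a finite Galois extension $F/K$ if $[L:K]>2$, $\tilde L\cap F=K$ and $M=LF$. For $L/K$ with $G=\mathrm{Gal}(\tilde L/K)$, $H=\mathrm{Gal}(\tilde L/L)$, $s_K(L)=[G:N_G(H)]$ is the number of distinct subfields of $\bar K$ isomorphic to $L$ over $K$. Given an ordering $(L_1,\dots,L_s)$ of these fields, the cluster tower is $K\subseteq L_1\subseteq L_1L_2\subseteq\cdots\subseteq L_1\cdots L_s=\tilde L$; its length is the number of distinct fields in the tower, and its degree sequence is the list of degrees over $K$ of the distinct fields of the tower other than $K$, in increasing order. (The distinct fields isomorphic to $M$ over $K$ are exactly the $L_iF$.) *)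

theory Defs
  imports "HOL-Algebra.Algebraic_Closure" "HOL-Algebra.Generated_Fields" "HOL-Algebra.Embedded_Algebras"
begin

(* The ambient algebraic closure \<bar>K is a HOL-Algebra field Om (a record),
   K is a subfield of its carrier, and subextensions are subfields E of Om with K \<subseteq> E. *)

definition ring_char :: "('a, 'b) ring_scheme \<Rightarrow> nat" where
  "ring_char R = (if \<exists>n::nat. n > 0 \<and> add_pow R n \<one>\<^bsub>R\<^esub> = \<zero>\<^bsub>R\<^esub>
                  then (LEAST n::nat. n > 0 \<and> add_pow R n \<one>\<^bsub>R\<^esub> = \<zero>\<^bsub>R\<^esub>) else 0)"

definition perfect_subfield :: "('a, 'b) ring_scheme \<Rightarrow> 'a set \<Rightarrow> bool" where
  "perfect_subfield R K \<longleftrightarrow> ring_char R = 0 \<or>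
     (\<forall>x\<in>K. \<exists>y\<in>K. y [^]\<^bsub>R\<^esub> (ring_char R) = x)"

definition intermediate :: "('a, 'b) ring_scheme \<Rightarrow> 'a set \<Rightarrow> 'a set \<Rightarrow> bool" where
  "intermediate R K E \<longleftrightarrow> subfield E R \<and> K \<subseteq> E"

definition finite_ext :: "('a, 'b) ring_scheme \<Rightarrow> 'a set \<Rightarrow> 'a set \<Rightarrow> bool" where
  "finite_ext R K E \<longleftrightarrow> intermediate R K E \<and> ring.finite_dimension R K E"

definition degree_over :: "('a, 'b) ring_scheme \<Rightarrow> 'a set \<Rightarrow> 'a set \<Rightarrow> nat" where
  "degree_over R K E = ring.dim R K E"

definition iso_over :: "('a, 'b) ring_scheme \<Rightarrow> 'a set \<Rightarrow> 'a set \<Rightarrow> 'a set \<Rightarrow> bool" where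
  "iso_over R K E E' \<longleftrightarrow> (\<exists>\<sigma>. \<sigma> \<in> ring_iso (R\<lparr>carrier := E\<rparr>) (R\<lparr>carrier := E'\<rparr>) \<and> (\<forall>x\<in>K. \<sigma> x = x))"

definition aut_over :: "('a, 'b) ring_scheme \<Rightarrow> 'a set \<Rightarrow> 'a set \<Rightarrow> ('a \<Rightarrow> 'a) set" where
  "aut_over R K E = (\<lambda>\<sigma>. restrict \<sigma> E) `
     {\<sigma>. \<sigma> \<in> ring_iso (R\<lparr>carrier := E\<rparr>) (R\<lparr>carrier := E\<rparr>) \<and> (\<forall>x\<in>K. \<sigma> x = x)}"

definition galois_ext :: "('a, 'b) ring_scheme \<Rightarrow> 'a set \<Rightarrow> 'a set \<Rightarrow> bool" where
  "galois_ext R K E \<longleftrightarrow> finite_ext R K E \<and> card (aut_over R K E) = degree_over R K E"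

definition galois_closure :: "('a, 'b) ring_scheme \<Rightarrow> 'a set \<Rightarrow> 'a set \<Rightarrow> 'a set" where
  "galois_closure R K E = \<Inter> {G. galois_ext R K G \<and> E \<subseteq> G}"

definition conjugates :: "('a, 'b) ring_scheme \<Rightarrow> 'a set \<Rightarrow> 'a set \<Rightarrow> 'a set set" where
  "conjugates R K E = {E'. intermediate R K E' \<and> iso_over R K E E'}"

definition compositum :: "('a, 'b) ring_scheme \<Rightarrow> 'a set set \<Rightarrow> 'a set" where
  "compositum R Es = generate_field R (\<Union> Es)"

definition strong_cluster_magnification ::
  "('a, 'b) ring_scheme \<Rightarrow> 'a set \<Rightarrow> 'a set \<Rightarrow> 'a set \<Rightarrow> 'a set \<Rightarrow> bool" where
  "strong_cluster_magnification R K M L F \<longleftrightarrow>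
     finite_ext R K L \<and> galois_ext R K F \<and> degree_over R K L > 2 \<and>
     galois_closure R K L \<inter> F = K \<and> M = compositum R {L, F}"

(* cluster tower K \<subseteq> L1 \<subseteq> L1L2 \<subseteq> ... \<subseteq> L1...Ls, each field composed additionally with F0
   (F0 = K gives the tower for L, F0 = F gives the tower for M = LF) *)
definition tower :: "('a, 'b) ring_scheme \<Rightarrow> 'a set \<Rightarrow> 'a set list \<Rightarrow> 'a set \<Rightarrow> 'a set list" where
  "tower R K Ls F0 = K # map (\<lambda>k. compositum R (set (take k Ls) \<union> {F0})) [1..<Suc (length Ls)]"

definition tower_length :: "'a set list \<Rightarrow> nat" where
  "tower_length T = card (set T)"

definition degree_sequence :: "('a, 'b) ring_scheme \<Rightarrow> 'a set \<Rightarrow> 'a set list \<Rightarrow> nat list" where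
  "degree_sequence R K T = sort (map (degree_over R K) (filter (\<lambda>E. E \<noteq> K) (remdups T)))"

end

theory Submission
  imports Defs
begin

text \<open>
  Write \<open>E\<^sub>k = L\<^sub>1\<cdots>L\<^sub>k\<close> for the fields of the cluster tower of \<open>L\<close>; the fields of the
  tower of \<open>M\<close> are the \<open>E\<^sub>kF\<close>. Every \<open>E\<^sub>k\<close> lies in the Galois closure of \<open>L\<close>, so
  \<open>E\<^sub>k \<inter> F = K\<close>. For a Galois extension \<open>F = K(\<theta>)\<close> this forces \<open>[E\<^sub>kF : K] = d [E\<^sub>k : K]\<close>:
  the minimal polynomial of \<open>\<theta>\<close> over \<open>E\<^sub>k\<close> divides the one over \<open>K\<close>, whose roots all
  lie in \<open>F\<close>, so its coefficients lie in \<open>E\<^sub>k \<inter> F = K\<close> and the two coincide. Since the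
  \<open>E\<^sub>k\<close> form a chain, \<open>E \<mapsto> EF\<close> is injective on them, as the degree recovers \<open>E\<close>,
  and it never yields \<open>K\<close>. Hence both towers have the same number of distinct fields and
  the degrees get multiplied by \<open>d\<close>.

  Galois means \<open>|Aut(F/K)| = [F:K]\<close>. Normality and a primitive element are
  derived from that count (Artin's argument).
\<close>

section \<open>Automorphisms over a subfield\<close>

context field
begin

lemma aut_over_iff:
  assumes "k \<subseteq> F" "subring F R"
  shows "\<tau> \<in> aut_over R k F \<longleftrightarrow>
    \<tau> \<in> ring_iso (R\<lparr>carrier := F\<rparr>) (R\<lparr>carrier := F\<rparr>) \<and> (\<forall>x\<in>k. \<tau> x = x) \<and> \<tau> \<in> extensional F"
proof
  interpret F: ring "R\<lparr>carrier := F\<rparr>" using subring_is_ring[OF assms(2)] .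
  assume "\<tau> \<in> aut_over R k F"
  then obtain \<phi> where \<phi>: "\<tau> = restrict \<phi> F" "\<phi> \<in> ring_iso (R\<lparr>carrier := F\<rparr>) (R\<lparr>carrier := F\<rparr>)"
    "\<forall>x\<in>k. \<phi> x = x"
    unfolding aut_over_def by auto
  have "\<tau> \<in> ring_iso (R\<lparr>carrier := F\<rparr>) (R\<lparr>carrier := F\<rparr>)"
    using F.ring_iso_restrict[OF \<phi>(2)] \<phi>(1) by simp
  with \<phi> assms(1) show
    "\<tau> \<in> ring_iso (R\<lparr>carrier := F\<rparr>) (R\<lparr>carrier := F\<rparr>) \<and> (\<forall>x\<in>k. \<tau> x = x) \<and> \<tau> \<in> extensional F"
    by auto
next
  assume "\<tau> \<in> ring_iso (R\<lparr>carrier := F\<rparr>) (R\<lparr>carrier := F\<rparr>) \<and> (\<forall>x\<in>k. \<tau> x = x) \<and> \<tau> \<in> extensional F"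
  moreover from this have "\<tau> = restrict \<tau> F" by (simp add: extensional_restrict)
  ultimately show "\<tau> \<in> aut_over R k F" unfolding aut_over_def by blast
qed

lemma aut_over_closed:
  assumes "k \<subseteq> F" "subring F R" "\<tau> \<in> aut_over R k F" "x \<in> F"
  shows "\<tau> x \<in> F"
  using ring_iso_memE(1)[of \<tau> "R\<lparr>carrier := F\<rparr>" "R\<lparr>carrier := F\<rparr>"] assms aut_over_iff by auto

lemma aut_over_ring_hom:
  assumes "k \<subseteq> F" "subring F R" "\<tau> \<in> aut_over R k F"
  shows "ring_hom_ring (R\<lparr>carrier := F\<rparr>) (R\<lparr>carrier := F\<rparr>) \<tau>"
  using assms aut_over_iff subring_is_ring[OF assms(2)]
  by (auto intro!: ring_hom_ringI2 simp: ring_iso_def)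

lemma aut_over_comp:
  assumes "k \<subseteq> F" "subring F R" "\<tau>1 \<in> aut_over R k F" "\<tau>2 \<in> aut_over R k F"
  shows "restrict (\<tau>1 \<circ> \<tau>2) F \<in> aut_over R k F"
proof -
  interpret F: ring "R\<lparr>carrier := F\<rparr>" using subring_is_ring[OF assms(2)] .
  have "\<tau>1 \<circ> \<tau>2 \<in> ring_iso (R\<lparr>carrier := F\<rparr>) (R\<lparr>carrier := F\<rparr>)"
    using ring_iso_set_trans assms aut_over_iff by blast
  then have "restrict (\<tau>1 \<circ> \<tau>2) F \<in> ring_iso (R\<lparr>carrier := F\<rparr>) (R\<lparr>carrier := F\<rparr>)"
    by (rule F.ring_iso_restrict) simp
  then show ?thesis using assms aut_over_iff by auto
qed

lemma aut_over_inv: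
  assumes "k \<subseteq> F" "subring F R" "\<tau> \<in> aut_over R k F"
  shows "restrict (inv_into F \<tau>) F \<in> aut_over R k F"
proof -
  interpret F: ring "R\<lparr>carrier := F\<rparr>" using subring_is_ring[OF assms(2)] .
  have iso: "\<tau> \<in> ring_iso (R\<lparr>carrier := F\<rparr>) (R\<lparr>carrier := F\<rparr>)" and fix_k: "\<forall>x\<in>k. \<tau> x = x"
    using assms aut_over_iff by auto
  have "restrict (inv_into F \<tau>) F \<in> ring_iso (R\<lparr>carrier := F\<rparr>) (R\<lparr>carrier := F\<rparr>)"
    using F.ring_iso_restrict[OF ring_iso_set_sym[OF F.ring_axioms iso]] by simp
  moreover have "inj_on \<tau> F" using ring_iso_memE(5)[OF iso] by (simp add: bij_betw_def)
  then have "\<forall>x\<in>k. restrict (inv_into F \<tau>) F x = x"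
    using fix_k assms(1) by (metis inv_into_f_f restrict_apply' subsetD)
  ultimately show ?thesis using assms aut_over_iff by auto
qed

lemma aut_over_self:
  assumes "subring F R"
  shows "aut_over R F F \<subseteq> {restrict id F}"
  using aut_over_iff[OF order_refl assms] by (auto simp: extensional_def fun_eq_iff)

lemma ring_hom_fixes_simple_extension:
  assumes "subring F R" "k \<subseteq> F" "\<alpha> \<in> F" "ring_hom_ring (R\<lparr>carrier := F\<rparr>) (R\<lparr>carrier := F\<rparr>) \<phi>"
    and "\<forall>x\<in>k. \<phi> x = x" "\<phi> \<alpha> = \<alpha>" "y \<in> simple_extension k \<alpha>"
  shows "\<phi> y = y"
proof -
  interpret H: ring_hom_ring "R\<lparr>carrier := F\<rparr>" "R\<lparr>carrier := F\<rparr>" \<phi> by (fact assms(4))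
  from assms(7) have "y \<in> F \<and> \<phi> y = y"
  proof (induction rule: simple_extension.induct)
    case zero
    show ?case using H.hom_zero subringE(2)[OF assms(1)] by simp
  next
    case (lin k1 k2)
    have k2: "k2 \<in> F" using lin assms(2) by auto
    have k1\<alpha>: "k1 \<otimes> \<alpha> \<in> F" using lin.IH assms(3) subringE(6)[OF assms(1)] by auto
    have "\<phi> (k1 \<otimes> \<alpha> \<oplus> k2) = \<phi> k1 \<otimes> \<phi> \<alpha> \<oplus> \<phi> k2"
      using H.hom_add[of "k1 \<otimes> \<alpha>" k2] H.hom_mult[of k1 \<alpha>] k1\<alpha> k2 lin.IH assms(3) by simp
    then show ?case using lin assms subringE(7)[OF assms(1)] k1\<alpha> k2 by auto
  qed
  then show ?thesis ..
qed

lemma eval_ring_hom_fixing_coeffs: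
  assumes "subring F R" "subring F' R" "ring_hom_ring (R\<lparr>carrier := F\<rparr>) (R\<lparr>carrier := F'\<rparr>) \<phi>"
    and "set p \<subseteq> F" "\<forall>c\<in>set p. \<phi> c = c" "x \<in> F"
  shows "\<phi> (eval p x) = eval p (\<phi> x)"
proof -
  interpret H: ring_hom_ring "R\<lparr>carrier := F\<rparr>" "R\<lparr>carrier := F'\<rparr>" \<phi> by (fact assms(3))
  have "map \<phi> p = p" using assms(5) by (induct p) auto
  then show ?thesis
    using H.eval_hom'[of x p] assms eval_consistent by simp
qed

lemma roots_finite_card_le_degree:
  assumes "p \<in> carrier (poly_ring R)" "p \<noteq> []"
  shows "finite {\<beta> \<in> carrier R. eval p \<beta> = \<zero>}" "card {\<beta> \<in> carrier R. eval p \<beta> = \<zero>} \<le> degree p"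
proof -
  have roots: "{\<beta> \<in> carrier R. eval p \<beta> = \<zero>} = set_mset (roots p)"
    using roots_mem_iff_is_root[OF assms(1)] assms(2) unfolding is_root_def by auto
  then show "finite {\<beta> \<in> carrier R. eval p \<beta> = \<zero>}" by simp
  have "card (set_mset (roots p)) \<le> size (roots p)"
    by (metis card_image_le finite_set_mset image_id mset_set_set_mset_msubset size_mset_mono size_mset_set)
  then have "card (set_mset (roots p)) \<le> degree p"
    using size_roots_le_degree[OF assms(1)] by linarith
  then show "card {\<beta> \<in> carrier R. eval p \<beta> = \<zero>} \<le> degree p" unfolding roots .
qed

lemma IrrE_poly_ring:
  assumes "subfield k R" "\<alpha> \<in> carrier R" "(algebraic over k) \<alpha>"
  shows "set (Irr k \<alpha>) \<subseteq> k" "Irr k \<alpha> \<in> carrier (poly_ring R)" "Irr k \<alpha> \<noteq> []"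
    "eval (Irr k \<alpha>) \<alpha> = \<zero>"
proof -
  have Irr: "Irr k \<alpha> \<in> carrier (k[X])" using IrrE(1)[OF assms] .
  then show "set (Irr k \<alpha>) \<subseteq> k"
    using polynomial_incl univ_poly_carrier by blast
  show "Irr k \<alpha> \<in> carrier (poly_ring R)"
    using Irr carrier_polynomial_shell[OF subfieldE(1)[OF assms(1)]] by blast
  show "Irr k \<alpha> \<noteq> []"
    using IrrE(2)[OF assms] unfolding ring_irreducible_def univ_poly_zero by auto
  show "eval (Irr k \<alpha>) \<alpha> = \<zero>" using IrrE(4)[OF assms] .
qed

lemma aut_over_root:
  assumes k: "subfield k R" and F: "subfield F R" and "k \<subseteq> F" "\<alpha> \<in> F"
    and alg: "(algebraic over k) \<alpha>" and \<tau>: "\<tau> \<in> aut_over R k F"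
  shows "\<tau> \<alpha> \<in> F" "eval (Irr k \<alpha>) (\<tau> \<alpha>) = \<zero>"
proof -
  have Fs: "subring F R" using subfieldE(1)[OF F] .
  have hom: "ring_hom_ring (R\<lparr>carrier := F\<rparr>) (R\<lparr>carrier := F\<rparr>) \<tau>"
    using aut_over_ring_hom[OF assms(3) Fs \<tau>] .
  interpret H: ring_hom_ring "R\<lparr>carrier := F\<rparr>" "R\<lparr>carrier := F\<rparr>" \<tau> by (fact hom)
  show "\<tau> \<alpha> \<in> F" using aut_over_closed[OF assms(3) Fs \<tau> assms(4)] .
  have \<alpha>: "\<alpha> \<in> carrier R" using assms(4) subringE(1)[OF Fs] by auto
  have "\<forall>c\<in>set (Irr k \<alpha>). \<tau> c = c"
    using IrrE_poly_ring(1)[OF k \<alpha> alg] \<tau> aut_over_iff[OF assms(3) Fs] by auto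
  then have "\<tau> (eval (Irr k \<alpha>) \<alpha>) = eval (Irr k \<alpha>) (\<tau> \<alpha>)"
    using eval_ring_hom_fixing_coeffs[OF Fs Fs hom] IrrE_poly_ring(1)[OF k \<alpha> alg] assms(3,4) by blast
  moreover have "\<tau> \<zero> = \<zero>" using H.hom_zero by simp
  ultimately show "eval (Irr k \<alpha>) (\<tau> \<alpha>) = \<zero>" using IrrE_poly_ring(4)[OF k \<alpha> alg] by simp
qed

text \<open>Composing with \<open>\<tau>\<^sub>0\<^sup>-\<^sup>1\<close> embeds the automorphisms that agree with \<open>\<tau>\<^sub>0\<close> at \<open>\<alpha>\<close>
  into \<open>Aut(F/k(\<alpha>))\<close>.\<close>

lemma card_aut_over_fiber_le:
  assumes kF: "k \<subseteq> F" and Fs: "subring F R" and \<alpha>: "\<alpha> \<in> F" and \<tau>0: "\<tau>0 \<in> aut_over R k F"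
    and fin: "finite (aut_over R (simple_extension k \<alpha>) F)"
  shows "finite {\<tau> \<in> aut_over R k F. \<tau> \<alpha> = \<tau>0 \<alpha>}"
    "card {\<tau> \<in> aut_over R k F. \<tau> \<alpha> = \<tau>0 \<alpha>} \<le> card (aut_over R (simple_extension k \<alpha>) F)"
proof -
  define fiber where "fiber = {\<tau> \<in> aut_over R k F. \<tau> \<alpha> = \<tau>0 \<alpha>}"
  define B where "B = aut_over R (simple_extension k \<alpha>) F"
  have "bij_betw \<tau>0 F F" using \<tau>0 aut_over_iff[OF kF Fs] ring_iso_memE(5) by fastforce
  then have inj0: "inj_on \<tau>0 F" and inv0: "inj_on (inv_into F \<tau>0) F"
    by (auto simp: bij_betw_def inj_on_inv_into)
  define g where "g = (\<lambda>\<tau>. restrict (restrict (inv_into F \<tau>0) F \<circ> \<tau>) F)"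
  have "g \<tau> \<in> B" if \<tau>: "\<tau> \<in> fiber" for \<tau>
  proof -
    have gA: "g \<tau> \<in> aut_over R k F"
      unfolding g_def using aut_over_comp[OF kF Fs aut_over_inv[OF kF Fs \<tau>0]] \<tau>
      unfolding fiber_def by blast
    have "g \<tau> \<alpha> = \<alpha>"
      unfolding g_def using \<tau> \<alpha> aut_over_closed[OF kF Fs \<tau>0 \<alpha>] inv_into_f_f[OF inj0 \<alpha>]
      unfolding fiber_def by simp
    then have "\<forall>y\<in>simple_extension k \<alpha>. g \<tau> y = y"
      using ring_hom_fixes_simple_extension[OF Fs kF \<alpha> aut_over_ring_hom[OF kF Fs gA]]
        gA aut_over_iff[OF kF Fs] by auto
    then show ?thesis unfolding B_def
      using gA aut_over_iff[OF kF Fs] aut_over_iff[OF simple_extension_subring_incl[OF Fs kF \<alpha>] Fs]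
      by auto
  qed
  moreover have "inj_on g fiber"
  proof
    fix \<tau>1 \<tau>2 assume \<tau>: "\<tau>1 \<in> fiber" "\<tau>2 \<in> fiber" "g \<tau>1 = g \<tau>2"
    then have A: "\<tau>1 \<in> aut_over R k F" "\<tau>2 \<in> aut_over R k F" unfolding fiber_def by auto
    show "\<tau>1 = \<tau>2"
    proof (rule extensionalityI[of _ F])
      show "\<tau>1 \<in> extensional F" "\<tau>2 \<in> extensional F" using A aut_over_iff[OF kF Fs] by auto
      fix x assume x: "x \<in> F"
      have "g \<tau>1 x = g \<tau>2 x" using \<tau> by simp
      then show "\<tau>1 x = \<tau>2 x"
        unfolding g_def using x A aut_over_closed[OF kF Fs] inv0 by (auto simp: inj_on_def)
    qed
  qed
  moreover have "finite B" using fin unfolding B_def .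
  ultimately show "finite fiber" "card fiber \<le> card B"
    using card_inj_on_le[of g fiber B] finite_imageD[of g fiber] rev_finite_subset[of B "g ` fiber"]
    by auto
qed

text \<open>An automorphism is determined, up to one fixing \<open>k(\<alpha>)\<close>, by the image of \<open>\<alpha>\<close>,
  which is a root of the minimal polynomial of \<open>\<alpha>\<close> lying in \<open>F\<close>.\<close>

lemma card_aut_over_le_roots_mult:
  assumes k: "subfield k R" and F: "subfield F R" and kF: "k \<subseteq> F" and \<alpha>: "\<alpha> \<in> F"
    and alg: "(algebraic over k) \<alpha>"
    and fin: "finite (aut_over R (simple_extension k \<alpha>) F)"
  shows "finite (aut_over R k F)"
    "card (aut_over R k F) \<le>
       card {\<beta> \<in> carrier R. eval (Irr k \<alpha>) \<beta> = \<zero> \<and> \<beta> \<in> F} * card (aut_over R (simple_extension k \<alpha>) F)"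
proof -
  define A where "A = aut_over R k F"
  define B where "B = aut_over R (simple_extension k \<alpha>) F"
  define S where "S = {\<beta> \<in> carrier R. eval (Irr k \<alpha>) \<beta> = \<zero> \<and> \<beta> \<in> F}"
  define fiber where "fiber = (\<lambda>\<beta>. {\<tau> \<in> A. \<tau> \<alpha> = \<beta>})"
  have Fs: "subring F R" using subfieldE(1)[OF F] .
  have \<alpha>R: "\<alpha> \<in> carrier R" using \<alpha> subringE(1)[OF Fs] by auto
  have finS: "finite S"
    using roots_finite_card_le_degree(1)[OF IrrE_poly_ring(2,3)[OF k \<alpha>R alg]] unfolding S_def
    by (rule rev_finite_subset) auto
  have imgS: "(\<lambda>\<tau>. \<tau> \<alpha>) ` A \<subseteq> S"
    unfolding S_def A_def using aut_over_root[OF k F kF \<alpha> alg] subringE(1)[OF Fs] by blast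
  have A_fibers: "A = (\<Union>\<beta>\<in>(\<lambda>\<tau>. \<tau> \<alpha>) ` A. fiber \<beta>)" unfolding fiber_def by auto
  have fiber_le: "finite (fiber \<beta>) \<and> card (fiber \<beta>) \<le> card B" if "\<beta> \<in> (\<lambda>\<tau>. \<tau> \<alpha>) ` A" for \<beta>
    using that card_aut_over_fiber_le[OF kF Fs \<alpha> _ fin] unfolding A_def B_def fiber_def by auto
  have fin_img: "finite ((\<lambda>\<tau>. \<tau> \<alpha>) ` A)" using finS imgS rev_finite_subset by auto
  then show "finite (aut_over R k F)" using A_fibers fiber_le unfolding A_def by (metis finite_UN)
  have "card A \<le> (\<Sum>\<beta>\<in>(\<lambda>\<tau>. \<tau> \<alpha>) ` A. card (fiber \<beta>))"
    using A_fibers card_UN_le[OF fin_img] by metis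
  also have "\<dots> \<le> card ((\<lambda>\<tau>. \<tau> \<alpha>) ` A) * card B"
    using sum_mono[of _ "\<lambda>\<beta>. card (fiber \<beta>)" "\<lambda>_. card B"] fiber_le by fastforce
  also have "\<dots> \<le> card S * card B" using card_mono[OF finS imgS] by simp
  finally show "card (aut_over R k F) \<le> card S * card B" unfolding A_def .
qed

section \<open>Dimension counts and normality of Galois extensions\<close>

lemma galois_extD:
  assumes "galois_ext R K F"
  shows "subfield F R" "K \<subseteq> F" "finite_dimension K F" "card (aut_over R K F) = dim K F"
  using assms unfolding galois_ext_def finite_ext_def intermediate_def degree_over_def by auto

lemma dimension_pos:
  assumes "subfield K R" "subring E R" "dimension n K E"
  shows "n > 0"
  using dimension_zero[OF assms(1)] assms(3) subringE(3)[OF assms(2)] one_not_zero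
  by (metis gr0I singletonD)

lemma dim_pos:
  assumes "subfield K R" "subring E R" "finite_dimension K E"
  shows "dim K E > 0"
  using dimension_pos[OF assms(1,2) finite_dimensionE[OF assms(1,3)]] by (simp add: over_def)

lemma galois_ext_dim_pos:
  assumes "subfield K R" "galois_ext R K F"
  shows "dim K F > 0"
  using dim_pos[OF assms(1) subfieldE(1)] galois_extD[OF assms(2)] by blast

lemma dimension_subset_eq:
  assumes "subfield K R" "E1 \<subseteq> E2" "dimension n K E1" "dimension n K E2"
  shows "E1 = E2"
proof -
  obtain Vs where Vs: "set Vs \<subseteq> carrier R" "independent K Vs" "length Vs = n" "Span K Vs = E1"
    using exists_base[OF assms(1,3)] by auto
  have "set Vs \<subseteq> E2" using Span_base_incl[OF assms(1) Vs(1)] Vs(4) assms(2) by auto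
  then have "Span K Vs = E2" using independent_length_eq_dimension[OF assms(1,4) Vs(2)] Vs(3) by auto
  then show ?thesis using Vs(4) by simp
qed

lemma dim_subset_eq:
  assumes "subfield K R" "E1 \<subseteq> E2" "finite_dimension K E1" "finite_dimension K E2"
    and "dim K E1 = dim K E2"
  shows "E1 = E2"
proof -
  have "dimension (dim K E1) K E1" "dimension (dim K E2) K E2"
    using finite_dimensionE[OF assms(1)] assms(3,4) by (simp_all add: over_def)
  then show ?thesis using dimension_subset_eq[OF assms(1,2)] assms(5) by simp
qed

lemma inj_on_chain_dim_mult:
  assumes K: "subfield K R" and fin: "\<And>E. E \<in> S \<Longrightarrow> finite_dimension K E"
    and chain: "\<And>E E'. E \<in> S \<Longrightarrow> E' \<in> S \<Longrightarrow> E \<subseteq> E' \<or> E' \<subseteq> E"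
    and dim: "\<And>E. E \<in> S \<Longrightarrow> dim K (f E) = d * dim K E" and "d > 0"
  shows "inj_on f S"
proof
  fix E E' assume E: "E \<in> S" "E' \<in> S" "f E = f E'"
  then have "dim K E = dim K E'" using dim[of E] dim[of E'] \<open>d > 0\<close> by simp
  from chain[OF E(1,2)] show "E = E'"
  proof
    assume "E \<subseteq> E'"
    then show ?thesis using dim_subset_eq[OF K _ fin[OF E(1)] fin[OF E(2)]] \<open>dim K E = dim K E'\<close> by simp
  next
    assume "E' \<subseteq> E"
    then show ?thesis using dim_subset_eq[OF K _ fin[OF E(2)] fin[OF E(1)]] \<open>dim K E = dim K E'\<close> by simp
  qed
qed

lemma subring_subalgebra:
  assumes "subring E R" "k \<subseteq> E"
  shows "subalgebra k E R"
  using assms subring.axioms(1)[OF assms(1)] subringE(6)[OF assms(1)]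
  unfolding subalgebra_def subalgebra_axioms_def by auto

lemma finite_dimension_over_intermediate:
  assumes k: "subfield k R" and k1: "subfield k1 R" and "k \<subseteq> k1" "k1 \<subseteq> F" "subring F R"
    and fin: "finite_dimension k F"
  shows "finite_dimension k1 F"
proof -
  obtain Vs where Vs: "set Vs \<subseteq> carrier R" "Span k Vs = F"
    using exists_base[OF k finite_dimensionE[OF k fin]] by auto
  have "set Vs \<subseteq> F" using Span_base_incl[OF k Vs(1)] Vs(2) by auto
  then have "Span k1 Vs \<subseteq> F"
    using subalgebra_Span_incl[OF k1 subring_subalgebra[OF assms(5,4)]] by blast
  moreover have "F \<subseteq> Span k1 Vs"
  proof
    fix x assume "x \<in> F"
    then obtain Ks where "x = combine Ks Vs" "set Ks \<subseteq> k"
      using Span_eq_combine_set[OF k Vs(1)] Vs(2) by auto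
    then show "x \<in> Span k1 Vs" using Span_eq_combine_set[OF k1 Vs(1)] assms(3) by auto
  qed
  ultimately show ?thesis using Span_finite_dimension[OF k1 Vs(1)] by simp
qed

lemma simple_subextension_dim:
  assumes k: "subfield k R" and F: "subfield F R" and kF: "k \<subseteq> F" and fin: "finite_dimension k F"
    and \<alpha>: "\<alpha> \<in> F"
  shows "(algebraic over k) \<alpha>" "subfield (simple_extension k \<alpha>) R"
    "simple_extension k \<alpha> \<subseteq> F" "k \<subseteq> simple_extension k \<alpha>"
    "finite_dimension (simple_extension k \<alpha>) F"
    "dim k F = degree (Irr k \<alpha>) * dim (simple_extension k \<alpha>) F"
    "dim (simple_extension k \<alpha>) F > 0"
proof -
  have Fs: "subring F R" using subfieldE(1)[OF F] .
  have \<alpha>R: "\<alpha> \<in> carrier R" using \<alpha> subringE(1)[OF Fs] by auto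
  show alg: "(algebraic over k) \<alpha>"
    using finite_dimension_imp_algebraic[OF k Fs fin \<alpha>] .
  show k1: "subfield (simple_extension k \<alpha>) R" using simple_extension_is_subfield[OF k \<alpha>R] alg by simp
  show k1F: "simple_extension k \<alpha> \<subseteq> F" using simple_extension_subring_incl[OF Fs kF \<alpha>] .
  show kk1: "k \<subseteq> simple_extension k \<alpha>"
    using simple_extension_incl[OF _ \<alpha>R] subfieldE(3)[OF k] by auto
  have d: "dimension (degree (Irr k \<alpha>)) k (simple_extension k \<alpha>)"
    using dimension_simple_extension[OF k \<alpha>R alg] .
  show fin1: "finite_dimension (simple_extension k \<alpha>) F"
    using finite_dimension_over_intermediate[OF k k1 kk1 k1F Fs fin] .
  show "dim k F = degree (Irr k \<alpha>) * dim (simple_extension k \<alpha>) F"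
    using telescopic_base_dim(2)[OF k k1 finite_dimensionI[OF d] fin1] dimI[OF k d]
    by (simp add: over_def)
  show "dim (simple_extension k \<alpha>) F > 0" using dim_pos[OF k1 Fs fin1] .
qed

lemma degree_Irr_ge_2:
  assumes k: "subfield k R" and \<alpha>: "\<alpha> \<in> carrier R" "(algebraic over k) \<alpha>" "\<alpha> \<notin> k"
  shows "degree (Irr k \<alpha>) \<ge> 2"
proof -
  have d: "dimension (degree (Irr k \<alpha>)) k (simple_extension k \<alpha>)"
    using dimension_simple_extension[OF k \<alpha>(1,2)] .
  have k1: "subfield (simple_extension k \<alpha>) R"
    using simple_extension_is_subfield[OF k \<alpha>(1)] \<alpha>(2) by simp
  have "degree (Irr k \<alpha>) \<noteq> 1"
  proof
    assume "degree (Irr k \<alpha>) = 1"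
    then have "k = simple_extension k \<alpha>"
      using dimension_subset_eq[OF k _ dimension_one[OF k]] d simple_extension_incl[OF _ \<alpha>(1)]
        subfieldE(3)[OF k] by auto
    then show False using simple_extension_mem[OF subfieldE(1)[OF k] \<alpha>(1)] \<alpha>(3) by auto
  qed
  moreover have "degree (Irr k \<alpha>) > 0" using dimension_pos[OF k subfieldE(1)[OF k1] d] .
  ultimately show ?thesis by linarith
qed

lemma card_roots_Irr_in_le_degree:
  assumes "subfield k R" "\<alpha> \<in> carrier R" "(algebraic over k) \<alpha>"
  shows "card {\<beta> \<in> carrier R. eval (Irr k \<alpha>) \<beta> = \<zero> \<and> \<beta> \<in> F} \<le> degree (Irr k \<alpha>)"
proof -
  note roots = roots_finite_card_le_degree[OF IrrE_poly_ring(2,3)[OF assms]]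
  have "{\<beta> \<in> carrier R. eval (Irr k \<alpha>) \<beta> = \<zero> \<and> \<beta> \<in> F}
      \<subseteq> {\<beta> \<in> carrier R. eval (Irr k \<alpha>) \<beta> = \<zero>}"
    by auto
  then show ?thesis using card_mono[OF roots(1)] roots(2) by (meson le_trans)
qed

lemma card_aut_over_le_dim:
  assumes "subfield k R" "subfield F R" "k \<subseteq> F" "finite_dimension k F"
  shows "finite (aut_over R k F) \<and> card (aut_over R k F) \<le> dim k F"
  using assms
proof (induction "dim k F" arbitrary: k rule: less_induct)
  case less
  note k = less.prems(1) and F = less.prems(2) and kF = less.prems(3) and fin = less.prems(4)
  have Fs: "subring F R" using subfieldE(1)[OF F] .
  show ?case
  proof (cases "F \<subseteq> k")
    case True
    then have "aut_over R k F \<subseteq> {restrict id F}" using aut_over_self[OF Fs] kF by auto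
    then have "finite (aut_over R k F)" "card (aut_over R k F) \<le> 1"
      using finite_subset card_mono[of "{restrict id F}"] by auto
    then show ?thesis using dim_pos[OF k Fs fin] by linarith
  next
    case False
    then obtain \<alpha> where \<alpha>: "\<alpha> \<in> F" "\<alpha> \<notin> k" by auto
    have \<alpha>R: "\<alpha> \<in> carrier R" using \<alpha> subringE(1)[OF Fs] by auto
    note k1 = simple_subextension_dim[OF k F kF fin \<alpha>(1)]
    have "dim (simple_extension k \<alpha>) F < dim k F"
      using k1(6,7) degree_Irr_ge_2[OF k \<alpha>R k1(1) \<alpha>(2)] by simp
    from less.hyps[OF this k1(2) F k1(3) k1(5)]
    have IH: "finite (aut_over R (simple_extension k \<alpha>) F)"
      "card (aut_over R (simple_extension k \<alpha>) F) \<le> dim (simple_extension k \<alpha>) F" by auto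
    note count = card_aut_over_le_roots_mult[OF k F kF \<alpha>(1) k1(1) IH(1)]
    have "card (aut_over R k F) \<le> degree (Irr k \<alpha>) * dim (simple_extension k \<alpha>) F"
      using count(2) mult_le_mono[OF card_roots_Irr_in_le_degree[OF k \<alpha>R k1(1)] IH(2)]
      by (rule le_trans)
    then show ?thesis using count(1) k1(6) by simp
  qed
qed

text \<open>A conjugate of \<open>\<alpha>\<close> outside \<open>F\<close> would lower the root count in
  \<open>card_aut_over_le_roots_mult\<close>, forcing \<open>|Aut(F/K)| < [F:K]\<close>.\<close>

lemma galois_ext_normal:
  assumes K: "subfield K R" and gal: "galois_ext R K F" and \<alpha>: "\<alpha> \<in> F"
    and \<beta>: "\<beta> \<in> carrier R" "eval (Irr K \<alpha>) \<beta> = \<zero>"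
  shows "\<beta> \<in> F"
proof (rule ccontr)
  assume \<beta>F: "\<beta> \<notin> F"
  note F = galois_extD[OF gal]
  have \<alpha>R: "\<alpha> \<in> carrier R" using \<alpha> subringE(1)[OF subfieldE(1)[OF F(1)]] by auto
  note k1 = simple_subextension_dim[OF K F(1,2,3) \<alpha>]
  define S where "S = {\<beta> \<in> carrier R. eval (Irr K \<alpha>) \<beta> = \<zero>}"
  note roots = roots_finite_card_le_degree[OF IrrE_poly_ring(2,3)[OF K \<alpha>R k1(1)], folded S_def]
  have "{\<beta> \<in> carrier R. eval (Irr K \<alpha>) \<beta> = \<zero> \<and> \<beta> \<in> F} \<subset> S"
    using \<beta> \<beta>F unfolding S_def by auto
  then have "card {\<beta> \<in> carrier R. eval (Irr K \<alpha>) \<beta> = \<zero> \<and> \<beta> \<in> F} < card S"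
    by (rule psubset_card_mono[OF roots(1)])
  then have fewer_roots: "card {\<beta> \<in> carrier R. eval (Irr K \<alpha>) \<beta> = \<zero> \<and> \<beta> \<in> F} < degree (Irr K \<alpha>)"
    using roots(2) by linarith
  have aut: "finite (aut_over R (simple_extension K \<alpha>) F)"
    "card (aut_over R (simple_extension K \<alpha>) F) \<le> dim (simple_extension K \<alpha>) F"
    using card_aut_over_le_dim[OF k1(2) F(1) k1(3,5)] by auto
  have "card (aut_over R K F)
      \<le> card {\<beta> \<in> carrier R. eval (Irr K \<alpha>) \<beta> = \<zero> \<and> \<beta> \<in> F} * card (aut_over R (simple_extension K \<alpha>) F)"
    using card_aut_over_le_roots_mult(2)[OF K F(1,2) \<alpha> k1(1) aut(1)] .
  also have "\<dots> \<le> card {\<beta> \<in> carrier R. eval (Irr K \<alpha>) \<beta> = \<zero> \<and> \<beta> \<in> F} * dim (simple_extension K \<alpha>) F"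
    using aut(2) by simp
  also have "\<dots> < degree (Irr K \<alpha>) * dim (simple_extension K \<alpha>) F" using fewer_roots k1(7) by simp
  finally show False using F(4) k1(6) by simp
qed

lemma conjugate_subset_galois:
  assumes K: "subfield K R" and gal: "galois_ext R K G" and L: "intermediate R K L" "L \<subseteq> G"
    and L': "L' \<in> conjugates R K L"
  shows "L' \<subseteq> G"
proof
  fix y assume y: "y \<in> L'"
  obtain \<phi> where \<phi>: "\<phi> \<in> ring_iso (R\<lparr>carrier := L\<rparr>) (R\<lparr>carrier := L'\<rparr>)" "\<forall>x\<in>K. \<phi> x = x"
    using L' unfolding conjugates_def iso_over_def by auto
  have Ls: "subring L R" "K \<subseteq> L" and L's: "subring L' R"
    using L L' subfieldE(1) unfolding conjugates_def intermediate_def by auto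
  obtain x where x: "x \<in> L" "y = \<phi> x"
    using y ring_iso_memE(5)[OF \<phi>(1)] by (auto simp: bij_betw_def)
  note G = galois_extD[OF gal]
  have xG: "x \<in> G" using x L by auto
  have xR: "x \<in> carrier R" using x subringE(1)[OF Ls(1)] by auto
  have alg: "(algebraic over K) x"
    using finite_dimension_imp_algebraic[OF K subfieldE(1)[OF G(1)] G(3) xG] .
  have hom: "ring_hom_ring (R\<lparr>carrier := L\<rparr>) (R\<lparr>carrier := L'\<rparr>) \<phi>"
    using \<phi> subring_is_ring[OF Ls(1)] subring_is_ring[OF L's]
    by (auto intro!: ring_hom_ringI2 simp: ring_iso_def)
  interpret H: ring_hom_ring "R\<lparr>carrier := L\<rparr>" "R\<lparr>carrier := L'\<rparr>" \<phi> by (fact hom)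
  have "\<phi> (eval (Irr K x) x) = eval (Irr K x) (\<phi> x)"
    using eval_ring_hom_fixing_coeffs[OF Ls(1) L's hom] IrrE_poly_ring(1)[OF K xR alg] Ls(2) \<phi>(2) x
    by (meson subset_iff)
  then have "eval (Irr K x) y = \<zero>" using IrrE_poly_ring(4)[OF K xR alg] H.hom_zero x by simp
  moreover have "y \<in> carrier R" using y subringE(1)[OF L's] by auto
  ultimately show "y \<in> G" using galois_ext_normal[OF K gal xG] by blast
qed

section \<open>Primitive elements of Galois extensions\<close>

lemma subalgebraI:
  assumes K: "subfield K R" and W: "W \<subseteq> carrier R" "\<zero> \<in> W"
    and add: "\<And>x y. x \<in> W \<Longrightarrow> y \<in> W \<Longrightarrow> x \<oplus> y \<in> W"
    and smult: "\<And>c x. c \<in> K \<Longrightarrow> x \<in> W \<Longrightarrow> c \<otimes> x \<in> W"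
  shows "subalgebra K W R"
proof -
  have "\<ominus> \<one> \<in> K" using subringE(3,5)[OF subfieldE(1)[OF K]] by auto
  then have "subgroup W (add_monoid R)"
    using add.subgroupI[of W] smult[of "\<ominus> \<one>"] W add
    by (auto simp: a_inv_def[symmetric] l_minus subset_iff)
  moreover have "subalgebra_axioms K W R" using smult by (simp add: subalgebra_axioms_def)
  ultimately show ?thesis by (simp add: subalgebra_def)
qed

lemma subalgebra_diff_closed:
  assumes "subalgebra K W R" "x \<in> W" "y \<in> W"
  shows "x \<ominus> y \<in> W"
proof -
  interpret W: subgroup W "add_monoid R" using subalgebra.axioms(1)[OF assms(1)] .
  show ?thesis using assms(2,3) W.m_closed W.m_inv_closed by (simp add: minus_eq a_inv_def)
qed

lemma subalgebra_smult_cancel: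
  assumes "subfield K R" "subalgebra K W R" "c \<in> K" "c \<noteq> \<zero>" "y \<in> carrier R" "c \<otimes> y \<in> W"
  shows "y \<in> W"
proof -
  have cR: "c \<in> carrier R" using assms(1,3) subfieldE(3) by auto
  then have "c \<in> Units R" using assms(4) field_Units by auto
  then have "inv c \<otimes> (c \<otimes> y) = y" using cR assms(5) m_assoc[symmetric] by simp
  moreover have "inv c \<in> K" using subfield_m_inv(1)[OF assms(1)] assms(3,4) by simp
  ultimately show ?thesis using subalgebra.smult_closed[OF assms(2) _ assms(6)] by metis
qed

lemma aut_over_equalizer_subalgebra:
  assumes K: "subfield K R" and KF: "K \<subseteq> F" and F: "subring F R"
    and s: "s \<in> aut_over R K F" and t: "t \<in> aut_over R K F"
  shows "subalgebra K {x \<in> F. s x = t x} R"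
proof (rule subalgebraI[OF K])
  interpret S: ring_hom_ring "R\<lparr>carrier := F\<rparr>" "R\<lparr>carrier := F\<rparr>" s
    using aut_over_ring_hom[OF KF F s] .
  interpret T: ring_hom_ring "R\<lparr>carrier := F\<rparr>" "R\<lparr>carrier := F\<rparr>" t
    using aut_over_ring_hom[OF KF F t] .
  show "{x \<in> F. s x = t x} \<subseteq> carrier R" using subringE(1)[OF F] by auto
  show "\<zero> \<in> {x \<in> F. s x = t x}" using S.hom_zero T.hom_zero subringE(2)[OF F] by simp
  show "x \<oplus> y \<in> {x \<in> F. s x = t x}" if "x \<in> {x \<in> F. s x = t x}" "y \<in> {x \<in> F. s x = t x}" for x y
    using that S.hom_add T.hom_add subringE(7)[OF F] by auto
  show "c \<otimes> x \<in> {x \<in> F. s x = t x}" if "c \<in> K" "x \<in> {x \<in> F. s x = t x}" for c x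
  proof -
    have "s c = c" "t c = c" using that(1) s t aut_over_iff[OF KF F] by auto
    then show ?thesis
      using that S.hom_mult[of c x] T.hom_mult[of c x] KF subringE(6)[OF F] by auto
  qed
qed

lemma line_meets_subalgebra_once:
  assumes K: "subfield K R" and W: "subalgebra K W R" and x: "x \<in> carrier R" "x \<notin> W"
    and y: "y \<in> carrier R" and c: "c \<in> K" "x \<oplus> c \<otimes> y \<in> W" and c': "c' \<in> K" "x \<oplus> c' \<otimes> y \<in> W"
  shows "c = c'"
proof (rule ccontr)
  assume "c \<noteq> c'"
  have R: "c \<in> carrier R" "c' \<in> carrier R" using c(1) c'(1) subfieldE(3)[OF K] by auto
  have "(x \<oplus> c \<otimes> y) \<ominus> (x \<oplus> c' \<otimes> y) = (c \<ominus> c') \<otimes> y" using R x(1) y by algebra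
  then have "(c \<ominus> c') \<otimes> y \<in> W" using subalgebra_diff_closed[OF W c(2) c'(2)] by simp
  moreover have "c \<ominus> c' \<in> K"
    using c(1) c'(1) subringE(5,7)[OF subfieldE(1)[OF K]] by (simp add: minus_eq)
  moreover have "c \<ominus> c' \<noteq> \<zero>" using \<open>c \<noteq> c'\<close> R by simp
  ultimately have "y \<in> W" using subalgebra_smult_cancel[OF K W] y by blast
  then have "c \<otimes> y \<in> W" using subalgebra.smult_closed[OF W c(1)] by simp
  moreover have "(x \<oplus> c \<otimes> y) \<ominus> c \<otimes> y = x" using R x(1) y by algebra
  ultimately show False using subalgebra_diff_closed[OF W c(2)] x(2) by metis
qed

text \<open>Given \<open>x\<close> avoiding all subspaces but \<open>W\<^sub>0\<close>, and \<open>y \<notin> W\<^sub>0\<close>, the points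
  \<open>x \<oplus> c \<otimes> y\<close> with \<open>c \<noteq> \<zero>\<close> avoid \<open>W\<^sub>0\<close>, and each other subspace contains at most one of
  them; \<open>K\<close> being infinite, one of them avoids all.\<close>

lemma avoid_proper_subspaces:
  assumes K: "subfield K R" "infinite K" and F: "subalgebra K F R"
    and "finite V" and V: "\<And>W. W \<in> V \<Longrightarrow> subalgebra K W R \<and> W \<subset> F"
  shows "\<exists>x\<in>F. \<forall>W\<in>V. x \<notin> W"
  using assms(4) V
proof (induction V rule: finite_induct)
  case empty
  then show ?case using subgroup.one_closed[OF subalgebra.axioms(1)[OF F]] by auto
next
  case (insert W0 V)
  have FR: "F \<subseteq> carrier R" using subalgebra_in_carrier[OF F] .
  obtain x where x: "x \<in> F" "\<forall>W\<in>V. x \<notin> W" using insert by auto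
  show ?case
  proof (cases "x \<in> W0")
    case False
    then show ?thesis using x by auto
  next
    case True
    have W0: "subalgebra K W0 R" "W0 \<subset> F" using insert.prems[of W0] by auto
    obtain y where y: "y \<in> F" "y \<notin> W0" using W0(2) by auto
    define B where "B = {\<zero>} \<union> (\<Union>W\<in>V. {c \<in> K. x \<oplus> c \<otimes> y \<in> W})"
    have "finite {c \<in> K. x \<oplus> c \<otimes> y \<in> W}" if W: "W \<in> V" for W
    proof -
      have "subalgebra K W R" "x \<in> carrier R" "x \<notin> W" "y \<in> carrier R"
        using insert.prems W x y FR by auto
      note unique = line_meets_subalgebra_once[OF K(1) this]
      show ?thesis
        using unique by (cases "{c \<in> K. x \<oplus> c \<otimes> y \<in> W} = {}") (auto intro: finite_subset[of _ "{_}"])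
    qed
    then have "finite B" unfolding B_def using insert.hyps(1) by blast
    then obtain c where c: "c \<in> K" "c \<notin> B" using K(2) by (meson ex_in_conv finite_subset subsetI)
    have R: "x \<in> carrier R" "y \<in> carrier R" "c \<in> carrier R"
      using x(1) y(1) c(1) FR subfieldE(3)[OF K(1)] by auto
    have "x \<oplus> c \<otimes> y \<notin> W0"
    proof
      assume "x \<oplus> c \<otimes> y \<in> W0"
      moreover have "(x \<oplus> c \<otimes> y) \<ominus> x = c \<otimes> y" using R by algebra
      ultimately have "c \<otimes> y \<in> W0" using subalgebra_diff_closed[OF W0(1) _ True] by metis
      moreover have "c \<noteq> \<zero>" using c unfolding B_def by auto
      ultimately show False using subalgebra_smult_cancel[OF K(1) W0(1) c(1)] R y(2) by blast
    qed
    moreover have "x \<oplus> c \<otimes> y \<in> F"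
      using x y c subalgebra.smult_closed[OF F] subgroup.m_closed[OF subalgebra.axioms(1)[OF F]]
      by simp
    moreover have "\<forall>W\<in>V. x \<oplus> c \<otimes> y \<notin> W" using c unfolding B_def by auto
    ultimately show ?thesis by auto
  qed
qed

lemma finite_dimension_finite:
  assumes K: "subfield K R" "finite K" and fin: "finite_dimension K F"
  shows "finite F"
proof -
  obtain Vs where Vs: "set Vs \<subseteq> carrier R" "Span K Vs = F"
    using exists_base[OF K(1) finite_dimensionE[OF K(1) fin]] by auto
  then have "F = (\<lambda>Ks. combine Ks Vs) ` {Ks. set Ks \<subseteq> K \<and> length Ks = length Vs}"
    using Span_eq_combine_set_length_version[OF K(1) Vs(1)] by auto
  then show ?thesis using finite_lists_length_eq[OF K(2)] by simp
qed

lemma finite_field_primitive_element: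
  assumes K: "subfield K R" and F: "subfield F R" "K \<subseteq> F" "finite F"
  shows "\<exists>\<theta>\<in>F. simple_extension K \<theta> = F"
proof -
  have Fs: "subring F R" using subfieldE(1)[OF F(1)] .
  obtain a where a: "a \<in> carrier (mult_of (R\<lparr>carrier := F\<rparr>))"
    "carrier (mult_of (R\<lparr>carrier := F\<rparr>)) = {a [^]\<^bsub>R\<lparr>carrier := F\<rparr>\<^esub> i | i::nat. i \<in> UNIV}"
    using field.finite_field_mult_group_has_gen[OF subfield_iff(2)[OF F(1)]] F(3) by auto
  have aF: "a \<in> F" using a(1) by simp
  have aR: "a \<in> carrier R" using aF subringE(1)[OF Fs] by auto
  have Ka: "subring (simple_extension K a) R"
    using simple_extension_is_subring[OF subfieldE(1)[OF K] aR] .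
  have pow: "a [^] i \<in> simple_extension K a" for i :: nat
    using monoid.nat_pow_closed[OF ring.is_monoid[OF subring_is_ring[OF Ka]], of a i]
      simple_extension_mem[OF subfieldE(1)[OF K] aR] nat_pow_consistent by simp
  have "F \<subseteq> simple_extension K a"
  proof
    fix x assume x: "x \<in> F"
    show "x \<in> simple_extension K a"
    proof (cases "x = \<zero>")
      case False
      then obtain i :: nat where "x = a [^]\<^bsub>R\<lparr>carrier := F\<rparr>\<^esub> i" using a(2) x by auto
      then have "x = a [^] i" using nat_pow_consistent by simp
      then show ?thesis using pow by simp
    qed simp
  qed
  then show ?thesis using simple_extension_subring_incl[OF Fs F(2) aF] aF by blast
qed

text \<open>Each automorphism sends \<open>\<theta>\<close> to a root of its minimal polynomial, so separating
  the automorphisms bounds \<open>[F:K] = |Aut(F/K)|\<close> by \<open>[K(\<theta>):K]\<close>.\<close>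

lemma galois_separating_element_generates:
  assumes K: "subfield K R" and gal: "galois_ext R K F" and \<theta>: "\<theta> \<in> F"
    and sep: "inj_on (\<lambda>s. s \<theta>) (aut_over R K F)"
  shows "simple_extension K \<theta> = F"
proof -
  note F = galois_extD[OF gal]
  have \<theta>R: "\<theta> \<in> carrier R" using \<theta> subringE(1)[OF subfieldE(1)[OF F(1)]] by auto
  note K\<theta> = simple_subextension_dim[OF K F(1,2,3) \<theta>]
  define S where "S = {\<beta> \<in> carrier R. eval (Irr K \<theta>) \<beta> = \<zero>}"
  note roots = roots_finite_card_le_degree[OF IrrE_poly_ring(2,3)[OF K \<theta>R K\<theta>(1)], folded S_def]
  have "(\<lambda>s. s \<theta>) ` aut_over R K F \<subseteq> S"
    unfolding S_def using aut_over_root[OF K F(1,2) \<theta> K\<theta>(1)] subringE(1)[OF subfieldE(1)[OF F(1)]]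
    by blast
  then have "dim K F \<le> degree (Irr K \<theta>)"
    using card_inj_on_le[OF sep _ roots(1)] roots(2) F(4) by simp
  moreover have "degree (Irr K \<theta>) > 0"
    using K\<theta>(6) galois_ext_dim_pos[OF K gal] by (cases "degree (Irr K \<theta>)") auto
  ultimately have "dim (simple_extension K \<theta>) F \<le> 1" using K\<theta>(6) by simp
  then have "dim (simple_extension K \<theta>) F = dim (simple_extension K \<theta>) (simple_extension K \<theta>)"
    using K\<theta>(7) dimI[OF K\<theta>(2) dimension_one[OF K\<theta>(2)]] by (simp add: over_def)
  then show ?thesis
    using dim_subset_eq[OF K\<theta>(2) K\<theta>(3)] K\<theta>(5)
      finite_dimensionI[OF dimension_one[OF K\<theta>(2)]] by simp
qed

lemma galois_primitive_element:
  assumes K: "subfield K R" and gal: "galois_ext R K F"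
  shows "\<exists>\<theta>\<in>F. simple_extension K \<theta> = F"
proof (cases "finite K")
  case True
  with galois_extD[OF gal] show ?thesis
    using finite_field_primitive_element[OF K] finite_dimension_finite[OF K True] by blast
next
  case False
  note F = galois_extD[OF gal]
  have Fs: "subring F R" using subfieldE(1)[OF F(1)] .
  define H where "H = aut_over R K F"
  have "finite H"
  proof (rule ccontr)
    assume "infinite H"
    then show False using F(4) galois_ext_dim_pos[OF K gal] unfolding H_def by simp
  qed
  define V where "V = (\<lambda>(s, t). {x \<in> F. s x = t x}) ` {(s, t) \<in> H \<times> H. s \<noteq> t}"
  have finV: "finite V" unfolding V_def
    by (rule finite_imageI, rule finite_subset[of _ "H \<times> H"]) (use \<open>finite H\<close> in auto)
  have proper: "subalgebra K W R \<and> W \<subset> F" if W: "W \<in> V" for W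
  proof -
    obtain s t where st: "s \<in> H" "t \<in> H" "s \<noteq> t" "W = {x \<in> F. s x = t x}"
      using W unfolding V_def by auto
    have "s \<in> extensional F" "t \<in> extensional F"
      using st aut_over_iff[OF F(2) Fs] unfolding H_def by auto
    then have "\<exists>x\<in>F. s x \<noteq> t x" using st(3) extensionalityI[of s F t] by blast
    then have "W \<subset> F" using st(4) by auto
    moreover have "subalgebra K W R"
      using aut_over_equalizer_subalgebra[OF K F(2) Fs, of s t] st unfolding H_def by simp
    ultimately show ?thesis by simp
  qed
  obtain \<theta> where \<theta>: "\<theta> \<in> F" "\<forall>W\<in>V. \<theta> \<notin> W"
    using avoid_proper_subspaces[OF K False subring_subalgebra[OF Fs F(2)] finV proper] by blast
  have "inj_on (\<lambda>s. s \<theta>) H"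
  proof (rule inj_onI, rule ccontr)
    fix s t assume st: "s \<in> H" "t \<in> H" "s \<theta> = t \<theta>" "s \<noteq> t"
    then have "{x \<in> F. s x = t x} \<in> V"
      unfolding V_def by (intro image_eqI[of _ _ "(s, t)"]) auto
    then have "\<theta> \<notin> {x \<in> F. s x = t x}" by (rule bspec[OF \<theta>(2)])
    then show False using \<theta>(1) st(3) by simp
  qed
  then have "simple_extension K \<theta> = F"
    unfolding H_def by (rule galois_separating_element_generates[OF K gal \<theta>(1)])
  then show ?thesis using \<theta>(1) by blast
qed

section \<open>Degree of a compositum with a Galois extension\<close>

lemma monic_root_factor:
  assumes g: "g \<in> carrier (poly_ring R)" "g \<noteq> []" "lead_coeff g = \<one>" and a: "is_root g a"
  obtains q where "q \<in> carrier (poly_ring R)" "q \<noteq> []" "lead_coeff q = \<one>" "q pdivides g"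
    "degree g = Suc (degree q)" "g = poly_mult [\<one>, \<ominus> a] q"
proof -
  define lin where "lin = [\<one>, \<ominus> a]"
  have aR: "a \<in> carrier R" using a unfolding is_root_def by simp
  have "lin pdivides g" unfolding lin_def using is_root_imp_pdivides[OF g(1) a] .
  then obtain q where q: "q \<in> carrier (poly_ring R)" "g = lin \<otimes>\<^bsub>poly_ring R\<^esub> q"
    unfolding pdivides_def factor_def by auto
  have lin: "lin \<in> carrier (poly_ring R)"
    unfolding lin_def univ_poly_carrier[symmetric] polynomial_def using aR by auto
  have qp: "polynomial (carrier R) q" and linp: "polynomial (carrier R) lin"
    using q(1) lin univ_poly_carrier by blast+
  have gm: "g = poly_mult lin q" using q(2) unfolding univ_poly_mult[of R "carrier R"] .
  have "q \<noteq> []"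
  proof
    assume "q = []"
    then have "g = poly_mult lin []" using gm by simp
    also have "\<dots> = []" using poly_mult_zero(2) polynomial_in_carrier[OF carrier_is_subring linp] by simp
    finally show False using g(2) by simp
  qed
  moreover have "degree g = Suc (degree q)"
    using poly_mult_degree_eq[OF carrier_is_subring linp qp] gm \<open>q \<noteq> []\<close> unfolding lin_def by simp
  moreover have "lead_coeff g = \<one> \<otimes> lead_coeff q"
    using poly_mult_lead_coeff[OF carrier_is_subring linp qp _ \<open>q \<noteq> []\<close>] gm unfolding lin_def by simp
  then have "lead_coeff q = \<one>"
    using g(3) polynomial_in_carrier[OF carrier_is_subring qp] \<open>q \<noteq> []\<close> by (cases q) auto
  moreover interpret UP: cring "poly_ring R" using univ_poly_is_cring[OF carrier_is_subring] .
  have "q pdivides g" unfolding pdivides_def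
    by (rule dividesI[OF lin]) (use q UP.m_comm[OF lin q(1)] in simp)
  ultimately show ?thesis using that q(1) gm unfolding lin_def by blast
qed

lemma splitted_monic_coeffs_in_subfield:
  assumes F: "subfield F R"
  shows "g \<in> carrier (poly_ring R) \<Longrightarrow> g \<noteq> [] \<Longrightarrow> lead_coeff g = \<one> \<Longrightarrow> splitted g
         \<Longrightarrow> set_mset (roots g) \<subseteq> F \<Longrightarrow> set g \<subseteq> F"
proof (induction "degree g" arbitrary: g rule: less_induct)
  case less
  have Fs: "subring F R" using subfieldE(1)[OF F] .
  show ?case
  proof (cases "degree g = 0")
    case True
    then have "g = [\<one>]" using less.prems(2,3) by (cases g) auto
    then show ?thesis using subringE(3)[OF Fs] by simp
  next
    case False
    then have "size (roots g) > 0" using less.prems(4) unfolding splitted_def by simp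
    then obtain a where a: "a \<in># roots g" by (cases "roots g") auto
    have aF: "a \<in> F" using a less.prems(5) by auto
    have "is_root g a" using roots_mem_iff_is_root[OF less.prems(1)] a by simp
    then obtain q where q: "q \<in> carrier (poly_ring R)" "q \<noteq> []" "lead_coeff q = \<one>" "q pdivides g"
      "degree g = Suc (degree q)" "g = poly_mult [\<one>, \<ominus> a] q"
      using monic_root_factor[OF less.prems(1-3)] by blast
    have "splitted q" using pdivides_imp_splitted[OF q(1) less.prems(1,2,4)] q(4) by simp
    moreover have "set_mset (roots q) \<subseteq> F"
      using pdivides_imp_roots_incl[OF q(1) less.prems(1,2)] q(4) less.prems(5) set_mset_mono by blast
    ultimately have "set q \<subseteq> F" using less.hyps[of q] q by simp
    moreover have "set [\<one>, \<ominus> a] \<subseteq> F" using subringE(3,5)[OF Fs] aF by auto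
    ultimately have "polynomial F g"
      unfolding q(6) by (intro poly_mult_is_polynomial[OF Fs])
    then show ?thesis by (rule polynomial_incl)
  qed
qed

lemma degree_Irr_disjoint_galois:
  assumes K: "subfield K R" and split: "\<And>P. P \<in> carrier (K[X]) \<Longrightarrow> splitted P"
    and E: "subfield E R" "K \<subseteq> E" and gal: "galois_ext R K F" and \<theta>: "\<theta> \<in> F"
    and EF: "E \<inter> F \<subseteq> K"
  shows "degree (Irr E \<theta>) = degree (Irr K \<theta>)"
proof -
  note F = galois_extD[OF gal]
  have \<theta>R: "\<theta> \<in> carrier R" using \<theta> subringE(1)[OF subfieldE(1)[OF F(1)]] by auto
  have algK: "(algebraic over K) \<theta>" using simple_subextension_dim(1)[OF K F(1,2,3) \<theta>] .
  have algE: "(algebraic over E) \<theta>" using algebraic_mono[OF E(2) algK] .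
  define f where "f = Irr K \<theta>"
  define g where "g = Irr E \<theta>"
  note fp = IrrE_poly_ring[OF K \<theta>R algK, folded f_def]
  note gp = IrrE_poly_ring[OF E(1) \<theta>R algE, folded g_def]
  have fK: "f \<in> carrier (K[X])" unfolding f_def using IrrE(1)[OF K \<theta>R algK] .
  have fE: "f \<in> carrier (E[X])"
    using fK E(2) unfolding univ_poly_carrier[symmetric] polynomial_def by auto
  have g_dvd_f: "g pdivides f"
    unfolding g_def using Irr_minimal[OF E(1) \<theta>R algE fE] fp(4) by simp
  have "splitted g" using pdivides_imp_splitted[OF gp(2) fp(2,3) split[OF fK]] g_dvd_f by simp
  moreover have "set_mset (roots f) \<subseteq> F"
  proof
    fix r assume "r \<in># roots f"
    then have "r \<in> carrier R" "eval (Irr K \<theta>) r = \<zero>"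
      using roots_mem_iff_is_root[OF fp(2)] unfolding is_root_def f_def by auto
    then show "r \<in> F" using galois_ext_normal[OF K gal \<theta>] by simp
  qed
  then have "set_mset (roots g) \<subseteq> F"
    using pdivides_imp_roots_incl[OF gp(2) fp(2,3)] g_dvd_f set_mset_mono by blast
  moreover have lg: "lead_coeff g = \<one>" unfolding g_def using IrrE(3)[OF E(1) \<theta>R algE] .
  ultimately have "set g \<subseteq> F"
    using splitted_monic_coeffs_in_subfield[OF F(1) gp(2,3)] by blast
  then have "g \<in> carrier (K[X])"
    using gp(1) EF lg unfolding univ_poly_carrier[symmetric] polynomial_def by auto
  then have f_dvd_g: "f pdivides g" unfolding f_def using Irr_minimal[OF K \<theta>R algK] gp(4) by simp
  show ?thesis
    using pdivides_imp_degree_le[OF carrier_is_subring fp(2) gp(2,3)] f_dvd_g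
      pdivides_imp_degree_le[OF carrier_is_subring gp(2) fp(2,3)] g_dvd_f
    unfolding f_def g_def by simp
qed

lemma generate_field_simple_extension:
  assumes E: "subfield E R" "K \<subseteq> E" and F: "subfield F R" "F = simple_extension K \<theta>"
    and \<theta>: "\<theta> \<in> F" "(algebraic over E) \<theta>"
  shows "generate_field R (E \<union> F) = simple_extension E \<theta>"
proof
  have \<theta>R: "\<theta> \<in> carrier R" using \<theta>(1) subfieldE(3)[OF F(1)] by auto
  have EFR: "E \<union> F \<subseteq> carrier R"
    using subfieldE(3)[OF E(1)] subfieldE(3)[OF F(1)] by auto
  have "E \<subseteq> simple_extension E \<theta>" using simple_extension_incl[OF subfieldE(3)[OF E(1)] \<theta>R] .
  moreover have "F \<subseteq> simple_extension E \<theta>" using mono_simple_extension[OF E(2)] F(2) by blast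
  ultimately show "generate_field R (E \<union> F) \<subseteq> simple_extension E \<theta>"
    using generate_field_min_subfield1[OF EFR simple_extension_is_subfield[OF E(1) \<theta>R, THEN iffD2, OF \<theta>(2)]]
    by simp
  have "E \<union> F \<subseteq> generate_field R (E \<union> F)" using generate_fieldE(2)[OF EFR refl] .
  then show "simple_extension E \<theta> \<subseteq> generate_field R (E \<union> F)"
    using simple_extension_subring_incl[OF subfieldE(1)[OF generate_field_is_subfield[OF EFR]]] \<theta>(1)
    by auto
qed

lemma dim_generate_field_disjoint_galois:
  assumes K: "subfield K R" and split: "\<And>P. P \<in> carrier (K[X]) \<Longrightarrow> splitted P"
    and E: "subfield E R" "K \<subseteq> E" "finite_dimension K E" and gal: "galois_ext R K F"
    and EF: "E \<inter> F \<subseteq> K"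
  shows "finite_dimension K (generate_field R (E \<union> F))"
    "dim K (generate_field R (E \<union> F)) = dim K E * dim K F"
proof -
  note F = galois_extD[OF gal]
  obtain \<theta> where \<theta>: "\<theta> \<in> F" "simple_extension K \<theta> = F"
    using galois_primitive_element[OF K gal] by auto
  have \<theta>R: "\<theta> \<in> carrier R" using \<theta>(1) subringE(1)[OF subfieldE(1)[OF F(1)]] by auto
  have algK: "(algebraic over K) \<theta>" using simple_subextension_dim(1)[OF K F(1,2,3) \<theta>(1)] .
  have algE: "(algebraic over E) \<theta>" using algebraic_mono[OF E(2) algK] .
  have EF_eq: "generate_field R (E \<union> F) = simple_extension E \<theta>"
    using generate_field_simple_extension[OF E(1,2) F(1) \<theta>(2)[symmetric] \<theta>(1) algE] .
  have dE: "dimension (degree (Irr K \<theta>)) E (simple_extension E \<theta>)"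
    using dimension_simple_extension[OF E(1) \<theta>R algE]
      degree_Irr_disjoint_galois[OF K split E(1,2) gal \<theta>(1) EF] by simp
  have dF: "dim K F = degree (Irr K \<theta>)"
    using simple_extension_dim[OF K \<theta>R algK] \<theta>(2) by (simp add: over_def)
  show "finite_dimension K (generate_field R (E \<union> F))"
    "dim K (generate_field R (E \<union> F)) = dim K E * dim K F"
    using telescopic_base_dim[OF K E(1,3) finite_dimensionI[OF dE]] dimI[OF E(1) dE] dF EF_eq
    by (simp_all add: over_def)
qed

lemma generate_field_absorb:
  assumes "H \<subseteq> carrier R" "K \<subseteq> F" "subfield F R"
  shows "generate_field R (generate_field R (H \<union> K) \<union> F) = generate_field R (H \<union> F)"
proof
  have FR: "F \<subseteq> carrier R" using subfieldE(3)[OF assms(3)] .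
  have HKR: "H \<union> K \<subseteq> carrier R" and HFR: "H \<union> F \<subseteq> carrier R" using assms(1,2) FR by auto
  have "generate_field R (H \<union> K) \<subseteq> generate_field R (H \<union> F)"
    using mono_generate_field[OF _ HFR, of "H \<union> K"] assms(2) by auto
  moreover have "F \<subseteq> generate_field R (H \<union> F)" using generate_fieldE(2)[OF HFR refl] by auto
  ultimately show "generate_field R (generate_field R (H \<union> K) \<union> F) \<subseteq> generate_field R (H \<union> F)"
    using generate_field_min_subfield1[OF _ generate_field_is_subfield[OF HFR]]
      generate_field_incl[OF HKR] FR by auto
  have "H \<union> F \<subseteq> generate_field R (H \<union> K) \<union> F" using generate_fieldE(2)[OF HKR refl] by auto
  then show "generate_field R (H \<union> F) \<subseteq> generate_field R (generate_field R (H \<union> K) \<union> F)"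
    using mono_generate_field generate_field_incl[OF HKR] FR by auto
qed

end

section \<open>Cluster towers\<close>

lemma remdups_map_inj_on:
  "inj_on f (set xs) \<Longrightarrow> remdups (map f xs) = map f (remdups xs)"
proof (induction xs)
  case (Cons x xs)
  have "f x \<in> f ` set xs \<longleftrightarrow> x \<in> set xs" using Cons.prems by (auto simp: inj_on_def)
  then show ?case using Cons by (auto simp: inj_on_insert)
qed simp

lemma sort_map_mult:
  "0 < d \<Longrightarrow> sort (map (\<lambda>a. d * a) xs) = map (\<lambda>a. d * (a::nat)) (sort xs)"
  by (rule properties_for_sort) (auto simp: sorted_map intro: sorted_wrt_mono_rel[OF _ sorted_sort])

lemma tower_length_map_inj_on:
  assumes "K \<notin> set xs" "K \<notin> f ` set xs" "inj_on f (set xs)"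
  shows "tower_length (K # map f xs) = tower_length (K # xs)"
  using assms card_image[OF assms(3)] by (simp add: tower_length_def)

lemma degree_sequence_map_mult:
  assumes "K \<notin> set xs" "K \<notin> f ` set xs" "inj_on f (set xs)" "0 < d"
    and "\<And>E. E \<in> set xs \<Longrightarrow> degree_over R K (f E) = d * degree_over R K E"
  shows "degree_sequence R K (K # map f xs) = map (\<lambda>a. d * a) (degree_sequence R K (K # xs))"
proof -
  have "filter (\<lambda>E. E \<noteq> K) (remdups (K # map f xs)) = map f (remdups xs)"
    using assms(2) remdups_map_inj_on[OF assms(3)] by (auto simp: filter_id_conv)
  then have "degree_sequence R K (K # map f xs) = sort (map (degree_over R K) (map f (remdups xs)))"
    unfolding degree_sequence_def by simp
  also have "map (degree_over R K) (map f (remdups xs))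
      = map (\<lambda>a. d * a) (map (degree_over R K) (remdups xs))"
    using assms(5) by simp
  also have "sort \<dots> = map (\<lambda>a. d * a) (sort (map (degree_over R K) (remdups xs)))"
    by (rule sort_map_mult[OF assms(4)])
  also have "filter (\<lambda>E. E \<noteq> K) (remdups (K # xs)) = remdups xs"
    using assms(1) by (auto simp: filter_id_conv)
  then have "sort (map (degree_over R K) (remdups xs)) = degree_sequence R K (K # xs)"
    unfolding degree_sequence_def by simp
  finally show ?thesis .
qed

lemma iso_over_base_eq:
  assumes "iso_over R K L K" "K \<subseteq> L"
  shows "L = K"
proof -
  obtain \<psi> where \<psi>: "\<psi> \<in> ring_iso (R\<lparr>carrier := L\<rparr>) (R\<lparr>carrier := K\<rparr>)" "\<forall>x\<in>K. \<psi> x = x"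
    using assms(1) unfolding iso_over_def by auto
  have bij: "bij_betw \<psi> L K" using ring_iso_memE(5)[OF \<psi>(1)] by simp
  have "x \<in> K" if x: "x \<in> L" for x
  proof -
    have "\<psi> x \<in> K" using bij x by (auto simp: bij_betw_def)
    then have "\<psi> (\<psi> x) = \<psi> x" using \<psi>(2) by auto
    then show ?thesis
      using bij x assms(2) \<open>\<psi> x \<in> K\<close> by (metis bij_betw_imp_inj_on inj_on_def subsetD)
  qed
  then show ?thesis using assms(2) by auto
qed

lemma tl_tower_base:
  "tl (tower R K Ls K) = map (\<lambda>k. generate_field R (\<Union> (set (take k Ls)) \<union> K)) [1..<Suc (length Ls)]"
proof -
  have "\<Union> (set (take k Ls) \<union> {K}) = \<Union> (set (take k Ls)) \<union> K" for k by auto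
  then show ?thesis unfolding tower_def compositum_def by simp
qed

context field
begin

lemma conjugates_in_carrier: "\<Union> (conjugates R K L) \<subseteq> carrier R"
  unfolding conjugates_def intermediate_def by (auto dest: subfieldE(3))

lemma tower_magnified:
  assumes "subfield F R" "K \<subseteq> F" "\<Union> (set Ls) \<subseteq> carrier R"
  shows "tower R K Ls F = K # map (\<lambda>E. compositum R {E, F}) (tl (tower R K Ls K))"
proof -
  have "compositum R (set (take k Ls) \<union> {F})
      = compositum R {compositum R (set (take k Ls) \<union> {K}), F}" for k
  proof -
    have "\<Union> (set (take k Ls)) \<subseteq> carrier R" using assms(3) set_take_subset[of k Ls] by auto
    moreover have "\<Union> (set (take k Ls) \<union> {F}) = \<Union> (set (take k Ls)) \<union> F"
      "\<Union> (set (take k Ls) \<union> {K}) = \<Union> (set (take k Ls)) \<union> K"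
      "\<Union> {E, F} = E \<union> F" for E
      by auto
    ultimately show ?thesis
      unfolding compositum_def using generate_field_absorb[OF _ assms(2,1)] by simp
  qed
  then show ?thesis unfolding tower_def by simp
qed

lemma tl_tower_subfield:
  assumes "\<Union> (set Ls) \<union> K \<subseteq> carrier R" "E \<in> set (tl (tower R K Ls K))"
  shows "subfield E R" "K \<subseteq> E"
proof -
  obtain k where E: "E = generate_field R (\<Union> (set (take k Ls)) \<union> K)"
    using assms(2) unfolding tl_tower_base by auto
  have "\<Union> (set (take k Ls)) \<union> K \<subseteq> carrier R" using assms(1) set_take_subset[of k Ls] by auto
  then show "subfield E R" "K \<subseteq> E" using generate_fieldE(1,2)[OF _ E] by auto
qed

lemma tl_tower_chain:
  assumes "\<Union> (set Ls) \<union> K \<subseteq> carrier R"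
    and "E \<in> set (tl (tower R K Ls K))" "E' \<in> set (tl (tower R K Ls K))"
  shows "E \<subseteq> E' \<or> E' \<subseteq> E"
proof -
  have mono: "generate_field R (\<Union> (set (take j Ls)) \<union> K) \<subseteq> generate_field R (\<Union> (set (take k Ls)) \<union> K)"
    if "j \<le> k" for j k
  proof (rule mono_generate_field)
    show "\<Union> (set (take j Ls)) \<union> K \<subseteq> \<Union> (set (take k Ls)) \<union> K"
      using set_take_subset_set_take[OF that, of Ls] by auto
    show "\<Union> (set (take k Ls)) \<union> K \<subseteq> carrier R" using assms(1) set_take_subset[of k Ls] by auto
  qed
  obtain j k where "E = generate_field R (\<Union> (set (take j Ls)) \<union> K)"
    "E' = generate_field R (\<Union> (set (take k Ls)) \<union> K)"
    using assms(2,3) unfolding tl_tower_base by auto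
  then show ?thesis using mono by (meson nat_le_linear)
qed

lemma tower_subset_galois:
  assumes K: "subfield K R" and L: "intermediate R K L" "L \<subseteq> G" and gal: "galois_ext R K G"
    and Ls: "set Ls = conjugates R K L" and E: "E \<in> set (tower R K Ls K)"
  shows "E \<subseteq> G"
proof -
  note G = galois_extD[OF gal]
  have "\<Union> (set Ls) \<subseteq> G" using conjugate_subset_galois[OF K gal L(1,2)] Ls by auto
  then have "generate_field R (\<Union> (set (take k Ls)) \<union> K) \<subseteq> G" for k
    using generate_field_min_subfield1[OF _ G(1)] subfieldE(3)[OF G(1)] set_take_subset[of k Ls] G(2)
    by (meson Sup_subset_mono Un_least order_trans)
  moreover have "E = K \<or> E \<in> set (tl (tower R K Ls K))" using E by (simp add: tower_def)
  ultimately show ?thesis using G(2) unfolding tl_tower_base by auto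
qed

lemma tl_tower_neq_base:
  assumes L: "intermediate R K L" "L \<noteq> K" and Ls: "set Ls = conjugates R K L"
    and E: "E \<in> set (tl (tower R K Ls K))"
  shows "E \<noteq> K"
proof
  assume "E = K"
  obtain k where k: "1 \<le> k" "k \<le> length Ls" and Ek: "E = generate_field R (\<Union> (set (take k Ls)) \<union> K)"
    using E unfolding tl_tower_base by auto
  have conj: "intermediate R K L' \<and> iso_over R K L L'" if "L' \<in> set Ls" for L'
    using Ls that unfolding conjugates_def by auto
  have "K \<subseteq> carrier R" using L(1) subfieldE(3) unfolding intermediate_def by blast
  then have "\<Union> (set (take k Ls)) \<union> K \<subseteq> carrier R"
    using Ls conjugates_in_carrier[of K L] set_take_subset[of k Ls] by blast
  then have "hd Ls \<subseteq> K"
    using generate_fieldE(2)[OF _ Ek] k \<open>E = K\<close> by (cases Ls) (auto simp: take_Cons')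
  moreover have "hd Ls \<in> set Ls" using k by (cases Ls) auto
  ultimately have "hd Ls = K" and "iso_over R K L K"
    using conj[of "hd Ls"] unfolding intermediate_def by auto
  then show False using iso_over_base_eq[of R K L] L unfolding intermediate_def by auto
qed

lemma tl_tower_compositum_dim:
  assumes closure: "algebraic_closure R K" and L: "intermediate R K L" and Ls: "set Ls = conjugates R K L"
    and G: "galois_ext R K G" "L \<subseteq> G" and F: "galois_ext R K F" "galois_closure R K L \<inter> F = K"
    and E: "E \<in> set (tl (tower R K Ls K))"
  shows "finite_dimension K E" "degree_over R K (compositum R {E, F}) = dim K F * degree_over R K E"
proof -
  have K: "subfield K R" using closure unfolding algebraic_closure_def by auto
  have LsR: "\<Union> (set Ls) \<union> K \<subseteq> carrier R"
    using Ls conjugates_in_carrier[of K L] subfieldE(3)[OF K] by auto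
  note E' = tl_tower_subfield[OF LsR E]
  have in_tower: "E \<in> set (tower R K Ls K)" using E unfolding tower_def by simp
  show fin: "finite_dimension K E"
    using subalbegra_incl_imp_finite_dimension[OF K galois_extD(3)[OF G(1)]
        subring_subalgebra[OF subfieldE(1)[OF E'(1)] E'(2)]]
      tower_subset_galois[OF K L G(2,1) Ls in_tower] .
  have "E \<subseteq> galois_closure R K L"
    unfolding galois_closure_def using tower_subset_galois[OF K L _ _ Ls in_tower]
    by (intro Inter_greatest) auto
  then have "E \<inter> F \<subseteq> K" using F(2) by auto
  moreover have "\<And>P. P \<in> carrier (K[X]) \<Longrightarrow> splitted P"
    using algebraic_closure.roots_over_subfield[OF closure] by simp
  ultimately show "degree_over R K (compositum R {E, F}) = dim K F * degree_over R K E"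
    using dim_generate_field_disjoint_galois(2)[OF K _ E' fin F(1)]
    unfolding compositum_def degree_over_def by simp
qed

lemma magnified_tower_scaling:
  assumes closure: "algebraic_closure R K"
    and L: "intermediate R K L" "L \<noteq> K" and Ls: "set Ls = conjugates R K L"
    and G: "galois_ext R K G" "L \<subseteq> G" and F: "galois_ext R K F" "galois_closure R K L \<inter> F = K"
  defines "xs \<equiv> tl (tower R K Ls K)" and "f \<equiv> \<lambda>E. compositum R {E, F}"
  shows "K \<notin> set xs" "K \<notin> f ` set xs" "inj_on f (set xs)"
proof -
  have K: "subfield K R" using closure unfolding algebraic_closure_def by auto
  have LsR: "\<Union> (set Ls) \<union> K \<subseteq> carrier R"
    using Ls conjugates_in_carrier[of K L] subfieldE(3)[OF K] by auto
  note E = tl_tower_subfield[OF LsR, folded xs_def]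
  have fin: "\<And>E. E \<in> set xs \<Longrightarrow> finite_dimension K E"
    and dim: "\<And>E. E \<in> set xs \<Longrightarrow> dim K (f E) = dim K F * dim K E"
    using tl_tower_compositum_dim[OF closure L(1) Ls G F] unfolding xs_def f_def degree_over_def by auto
  show K_notin: "K \<notin> set xs" using tl_tower_neq_base[OF L Ls] unfolding xs_def by blast
  have sub: "E \<subseteq> f E" if "E \<in> set xs" for E
    using generate_fieldE(2)[OF _ refl, of "E \<union> F"] subfieldE(3)[OF E(1)[OF that]]
      subfieldE(3)[OF galois_extD(1)[OF F(1)]]
    unfolding f_def compositum_def by auto
  have "f E \<noteq> K" if "E \<in> set xs" for E
  proof
    assume "f E = K"
    then have "E = K" using sub[OF that] E(2)[OF that] by auto
    then show False using K_notin that by simp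
  qed
  then show "K \<notin> f ` set xs" by auto
  show "inj_on f (set xs)"
    using inj_on_chain_dim_mult[OF K _ _ _ galois_ext_dim_pos[OF K F(1)]]
      fin tl_tower_chain[OF LsR, folded xs_def] dim
    by blast
qed

lemma cluster_tower_magnification:
  assumes closure: "algebraic_closure R K"
    and L: "intermediate R K L" "L \<noteq> K" and Ls: "set Ls = conjugates R K L"
    and F: "galois_ext R K F" "galois_closure R K L \<inter> F = K"
  shows "tower_length (tower R K Ls F) = tower_length (tower R K Ls K)"
    "degree_sequence R K (tower R K Ls F) = map (\<lambda>a. dim K F * a) (degree_sequence R K (tower R K Ls K))"
proof -
  have K: "subfield K R" using closure unfolding algebraic_closure_def by auto
  define xs where "xs = tl (tower R K Ls K)"
  have towerK: "tower R K Ls K = K # xs" unfolding xs_def by (simp add: tower_def)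
  have "\<Union> (set Ls) \<subseteq> carrier R" using Ls conjugates_in_carrier[of K L] by simp
  then have towerF: "tower R K Ls F = K # map (\<lambda>E. compositum R {E, F}) xs"
    unfolding xs_def using tower_magnified[OF galois_extD(1,2)[OF F(1)]] by blast
  have "tower_length (tower R K Ls F) = tower_length (tower R K Ls K) \<and>
    degree_sequence R K (tower R K Ls F) = map (\<lambda>a. dim K F * a) (degree_sequence R K (tower R K Ls K))"
  proof (cases "F = K")
    case True
    then show ?thesis using dimI[OF K dimension_one[OF K]] by (simp add: over_def)
  next
    text \<open>Otherwise \<open>galois_closure R K L\<close> is not the junk value \<open>UNIV\<close> (an intersection of
      no fields), so some Galois extension contains \<open>L\<close>.\<close>
    case False
    then obtain G where G: "galois_ext R K G" "L \<subseteq> G"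
      using F(2) unfolding galois_closure_def by auto
    note scaling = magnified_tower_scaling[OF closure L Ls G F, folded xs_def]
    have "dim K F > 0" using galois_ext_dim_pos[OF K F(1)] .
    then show ?thesis
      unfolding towerK towerF
      using tower_length_map_inj_on[OF scaling] degree_sequence_map_mult[OF scaling]
        tl_tower_compositum_dim(2)[OF closure L(1) Ls G F, folded xs_def]
      by auto
  qed
  then show "tower_length (tower R K Ls F) = tower_length (tower R K Ls K)"
    "degree_sequence R K (tower R K Ls F) = map (\<lambda>a. dim K F * a) (degree_sequence R K (tower R K Ls K))"
    by auto
qed

end

theorem mainTheorem7:
  fixes Om :: "('a, 'b) ring_scheme" and K L F M :: "'a set" and d :: nat
    and Ls :: "'a set list" and l :: nat
  assumes closure: "algebraic_closure Om K"
    and perfect: "perfect_subfield Om K"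
    and magn: "strong_cluster_magnification Om K M L F"
    and deg_F: "degree_over Om K F = d"
    and Ls_distinct: "distinct Ls"
    and Ls_set: "set Ls = conjugates Om K L"
  shows "(tower_length (tower Om K Ls K) = l \<longleftrightarrow> tower_length (tower Om K Ls F) = l)
    \<and> (tower_length (tower Om K Ls K) = l \<longrightarrow>
         degree_sequence Om K (tower Om K Ls F) = map (\<lambda>a. d * a) (degree_sequence Om K (tower Om K Ls K)))"
proof -
  interpret C: algebraic_closure Om K by (fact closure)
  have K: "subfield K Om" using closure unfolding algebraic_closure_def by auto
  have L: "intermediate Om K L" "C.dim K L > 2" and F: "galois_ext Om K F" "galois_closure Om K L \<inter> F = K"
    using magn unfolding strong_cluster_magnification_def finite_ext_def degree_over_def by auto
  have "L \<noteq> K" using L(2) C.dimI[OF K C.dimension_one[OF K]] by (auto simp: over_def)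
  from C.cluster_tower_magnification[OF closure L(1) this Ls_set F] show ?thesis
    using deg_F unfolding degree_over_def by simp
qed

end
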